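(* Let $(G,C,s,t)$ be an input to $\mathrm{DACC}$ with $n=|V(G)|$ and $m=|E(G)|$, and let $\mu(C)$ denote the number of maximal independent sets of $C$. The algorithm that enumerates the maximal independent sets $I$ of $C$ using an output-sensitive enumeration procedure with delay $M(m)$ (where $M(k)=\mathcal{O}(k^{2.372})$ is the time to multiply two $k\times k$ matrices), and for each $I$ runs breadth-first search to test whether the digraph $(V(G),I)$ contains a directed $s$–$t$ path (returning True as soon as one is found, and False otherwise), runs in time \[\mathcal{O}(n+m)\cdot M(m)\cdot \mu(C)\;\le\;\mathcal{O}(n^{6.75})\cdot\mu(C)\;\le\;\mathcal{O}(1.45^{n^2}).\]
   Context: Let $\Gamma=(V,E)$ be a directed acyclic graph. A constraint graph for $\Gamma$ is a simple undirected graph $C=(E,E')$ whose vertex set is the edge set of $\Gamma$; an edge $e_1e_2\in E'$ represents the constraint that the edges $e_1$ and $e_2$ cannot both be present. A subgraph $\Gamma'\subseteq\Gamma$ is valid if its edge set is an independent set in $C$. The problem $\mathrm{DACC}$ takes as input a directed acyclic graph $\Gamma$, a constraint graph $C$ for $\Gamma$, and vertices $s,t$, and asks whether some valid subgraph of $\Gamma$ contains a directed path from $s$ to $t$. An output-sensitive enumeration algorithm with delay $d$ for a set $S$ lists all elements of $S$ in total time at most $d|S|$. *)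

theory Defs
  imports Main "HOL-Library.Landau_Symbols"
begin

definition is_dag :: "'v set \<Rightarrow> ('v \<times> 'v) set \<Rightarrow> bool" where
  "is_dag V E \<longleftrightarrow> finite V \<and> E \<subseteq> V \<times> V \<and> acyclic E"

definition constraint_graph :: "('v \<times> 'v) set \<Rightarrow> (('v \<times> 'v) \<times> ('v \<times> 'v)) set \<Rightarrow> bool" where
  "constraint_graph E C \<longleftrightarrow> C \<subseteq> E \<times> E \<and> sym C \<and> irrefl C"

definition indep_set :: "('e \<times> 'e) set \<Rightarrow> 'e set \<Rightarrow> 'e set \<Rightarrow> bool" where
  "indep_set C X I \<longleftrightarrow> I \<subseteq> X \<and> (\<forall>a\<in>I. \<forall>b\<in>I. (a, b) \<notin> C)"

definition maximal_indep_set :: "('e \<times> 'e) set \<Rightarrow> 'e set \<Rightarrow> 'e set \<Rightarrow> bool" where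
  "maximal_indep_set C X I \<longleftrightarrow> indep_set C X I \<and> (\<forall>J. indep_set C X J \<and> I \<subseteq> J \<longrightarrow> J = I)"

definition mu :: "('e \<times> 'e) set \<Rightarrow> 'e set \<Rightarrow> nat" where
  "mu C X = card {I. maximal_indep_set C X I}"

definition dacc :: "'v set \<Rightarrow> ('v \<times> 'v) set \<Rightarrow> (('v \<times> 'v) \<times> ('v \<times> 'v)) set \<Rightarrow> 'v \<Rightarrow> 'v \<Rightarrow> bool" where
  "dacc V E C s t \<longleftrightarrow> (\<exists>E' \<subseteq> E. indep_set C E E' \<and> (s, t) \<in> E'\<^sup>*)"

text \<open>An output-sensitive enumeration of S with delay d: a duplicate-free listing of S,
  each output x paired with the (nonnegative) time spent producing it, total time at most d*|S|.\<close>
definition output_sensitive_enum :: "'a set \<Rightarrow> real \<Rightarrow> ('a \<times> real) list \<Rightarrow> bool" where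
  "output_sensitive_enum S d L \<longleftrightarrow>
     distinct (map fst L) \<and> set (map fst L) = S \<and> (\<forall>x\<in>set L. 0 \<le> snd x) \<and>
     sum_list (map snd L) \<le> d * real (length L)"

fun alg_run :: "'v \<Rightarrow> 'v \<Rightarrow> (('v \<times> 'v) set \<times> real) list \<Rightarrow> bool" where
  "alg_run s t [] = False"
| "alg_run s t ((I, d) # rest) = ((s, t) \<in> I\<^sup>* \<or> alg_run s t rest)"

text \<open>Running time: enumeration time of each processed output plus the BFS cost
  bfs n |I| on the digraph (V, I) with n = |V|.\<close>
fun alg_time :: "(nat \<Rightarrow> nat \<Rightarrow> real) \<Rightarrow> nat \<Rightarrow> 'v \<Rightarrow> 'v \<Rightarrow> (('v \<times> 'v) set \<times> real) list \<Rightarrow> real" where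
  "alg_time bfs n s t [] = 0"
| "alg_time bfs n s t ((I, d) # rest) =
     d + bfs n (card I) + (if (s, t) \<in> I\<^sup>* then 0 else alg_time bfs n s t rest)"

end

theory Submission
  imports Defs Complex_Main
begin

text \<open>A valid subgraph containing an s-t path extends to a maximal independent set of C,
  and reachability is monotone in the edge set, so it suffices to test the mu(C) maximal sets,
  each at the cost of its enumeration delay M(m) plus one BFS in O(n + m). A DAG contains no
  edge together with its reverse, so 2m \<le> n^2; hence (n + m) M(m) = O(n^2 n^4.744), and
  mu(C) \<le> 2^m \<le> sqrt 2^(n^2), where sqrt 2 < 1.45 absorbs the polynomial factor.\<close>

lemma bigo_imp_le_const_max_one:
  fixes f g :: "nat \<Rightarrow> real"
  assumes "f \<in> O(g)"
  shows "\<exists>c>0. \<forall>k. f k \<le> c * max 1 \<bar>g k\<bar>"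
proof -
  obtain c where c: "c > 0" and "eventually (\<lambda>k. norm (f k) \<le> c * norm (g k)) at_top"
    using assms unfolding bigo_def by auto
  then obtain N where N: "\<And>k. k \<ge> N \<Longrightarrow> \<bar>f k\<bar> \<le> c * \<bar>g k\<bar>"
    unfolding eventually_at_top_linorder by auto
  define B where "B = Max (insert 0 (f ` {..<N}))"
  have B: "f k \<le> B" if "k < N" for k
    unfolding B_def using that by (intro Max_ge) auto
  have B0: "0 \<le> B"
    unfolding B_def by (intro Max_ge) auto
  have "f k \<le> (B + c) * max 1 \<bar>g k\<bar>" for k
  proof (cases "k < N")
    case True
    then have "f k \<le> (B + c) * 1" using B c by force
    also have "\<dots> \<le> (B + c) * max 1 \<bar>g k\<bar>"
      using B0 c by (intro mult_left_mono) auto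
    finally show ?thesis .
  next
    case False
    then have "f k \<le> c * \<bar>g k\<bar>"
      using N[of k] by (meson abs_ge_self not_less order_trans)
    also have "\<dots> \<le> (B + c) * max 1 \<bar>g k\<bar>"
      using B0 c by (intro mult_mono) auto
    finally show ?thesis .
  qed
  then show ?thesis using B0 c by (intro exI[of _ "B + c"]) auto
qed

lemma power_times_geometric_square_bounded:
  fixes q :: real
  assumes "0 \<le> q" "q < 1"
  shows "\<exists>B. \<forall>n. real n ^ d * q ^ (n\<^sup>2) \<le> B"
proof -
  define f where "f n = real n ^ d * q ^ (n\<^sup>2)" for n
  obtain N where N: "q ^ N < 1 / 2 ^ d"
    using real_arch_pow_inv[of "1 / 2 ^ d" q] assms by auto
  have tail: "f n \<le> 1" if "N \<le> n" for n
  proof -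
    have "real n ^ d \<le> (2 ^ n) ^ d"
      using less_exp[of n] by (intro power_mono) (auto simp flip: of_nat_less_iff)
    also have "\<dots> = (2 ^ d) ^ n"
      by (simp flip: power_mult add: mult.commute)
    moreover have "q ^ (n\<^sup>2) = (q ^ n) ^ n"
      by (simp add: power2_eq_square power_mult)
    ultimately have "f n \<le> (2 ^ d) ^ n * (q ^ n) ^ n"
      unfolding f_def using assms by (simp add: mult_right_mono)
    also have "\<dots> = (2 ^ d * q ^ n) ^ n"
      by (simp add: power_mult_distrib)
    also have "\<dots> \<le> 1"
    proof (rule power_le_one)
      have "2 ^ d * q ^ n \<le> 2 ^ d * q ^ N"
        using that assms by (intro mult_left_mono power_decreasing) auto
      also have "\<dots> \<le> 1"
        using N by (simp add: field_simps)
      finally show "2 ^ d * q ^ n \<le> 1" .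
    qed (use assms in auto)
    finally show ?thesis .
  qed
  have "f n \<le> 1 + (\<Sum>k<N. f k)" for n
  proof -
    have f_nonneg: "0 \<le> f k" for k unfolding f_def using assms by simp
    show ?thesis
    proof (cases "n < N")
      case True
      then show ?thesis using f_nonneg by (simp add: member_le_sum add_increasing)
    next
      case False
      then show ?thesis using tail f_nonneg by (simp add: add_increasing2 sum_nonneg)
    qed
  qed
  then show ?thesis unfolding f_def by blast
qed

lemma powr_times_power_square_le:
  fixes a b c :: real
  assumes "0 \<le> b" "b < c"
  shows "\<exists>K. \<forall>n. real n powr a * b ^ (n\<^sup>2) \<le> K * c ^ (n\<^sup>2)"
proof -
  define d where "d = nat \<lceil>a\<rceil>"
  obtain K where K: "\<And>n. real n ^ d * (b / c) ^ (n\<^sup>2) \<le> K"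
    using power_times_geometric_square_bounded[of "b / c" d] assms by auto
  have "real n powr a * b ^ (n\<^sup>2) \<le> K * c ^ (n\<^sup>2)" for n
  proof -
    have "real n powr a \<le> real n ^ d"
    proof (cases "n = 0")
      case False
      then have "real n powr a \<le> real n powr real d"
        unfolding d_def by (intro powr_mono) linarith+
      then show ?thesis using False by (simp add: powr_realpow)
    qed simp
    then have "real n powr a * b ^ (n\<^sup>2) \<le> (real n ^ d * (b / c) ^ (n\<^sup>2)) * c ^ (n\<^sup>2)"
      using assms by (simp add: mult_right_mono power_divide)
    also have "\<dots> \<le> K * c ^ (n\<^sup>2)"
      using K assms by (intro mult_right_mono) auto
    finally show ?thesis .
  qed
  then show ?thesis by blast
qed

lemma acyclic_card_le_half_square:
  assumes "finite V" "E \<subseteq> V \<times> V" "acyclic E"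
  shows "2 * card E \<le> card V ^ 2"
proof -
  have "E \<inter> E\<inverse> = {}"
  proof (rule ccontr)
    assume "E \<inter> E\<inverse> \<noteq> {}"
    then obtain x y where "(x, y) \<in> E" "(y, x) \<in> E" by auto
    then have "(x, x) \<in> E\<^sup>+" by auto
    then show False using assms(3) unfolding acyclic_def by auto
  qed
  moreover have "finite E"
    using assms(1,2) by (simp add: finite_subset)
  ultimately have "card (E \<union> E\<inverse>) = 2 * card E"
    by (simp add: card_Un_disjoint)
  moreover have "card (E \<union> E\<inverse>) \<le> card (V \<times> V)"
    using assms(1,2) by (intro card_mono) auto
  ultimately show ?thesis by (simp add: card_cartesian_product power2_eq_square)
qed

lemma maximal_indep_set_subset: "maximal_indep_set C X I \<Longrightarrow> I \<subseteq> X"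
  unfolding maximal_indep_set_def indep_set_def by blast

lemma indep_set_extends_to_maximal:
  assumes "finite X" "indep_set C X I"
  shows "\<exists>J. maximal_indep_set C X J \<and> I \<subseteq> J"
proof -
  let ?S = "{J. indep_set C X J \<and> I \<subseteq> J}"
  have "finite ?S"
    using assms(1) by (rule finite_subset[rotated, OF finite_Pow_iff[THEN iffD2]])
      (auto simp: indep_set_def)
  then obtain J where "J \<in> ?S" "\<And>K. K \<in> ?S \<Longrightarrow> J \<subseteq> K \<Longrightarrow> J = K"
    using finite_has_maximal2[of ?S I] assms(2) by auto
  then show ?thesis unfolding maximal_indep_set_def by blast
qed

lemma mu_le_two_power:
  assumes "finite X"
  shows "mu C X \<le> 2 ^ card X"
proof -
  have "{I. maximal_indep_set C X I} \<subseteq> Pow X"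
    using maximal_indep_set_subset by blast
  then have "mu C X \<le> card (Pow X)"
    unfolding mu_def using assms by (intro card_mono) auto
  then show ?thesis using assms by (simp add: card_Pow)
qed

lemma dag_finite_edges: "is_dag V E \<Longrightarrow> finite E"
  unfolding is_dag_def by (metis finite_cartesian_product finite_subset)

lemma dag_card_edges_le: "is_dag V E \<Longrightarrow> 2 * card E \<le> card V ^ 2"
  unfolding is_dag_def by (simp add: acyclic_card_le_half_square)

lemma dag_mu_le_sqrt2_power:
  assumes "is_dag V E"
  shows "real (mu C E) \<le> sqrt 2 ^ (card V ^ 2)"
proof -
  have finE: "finite E" and edges: "2 * card E \<le> card V ^ 2"
    using assms by (simp_all add: dag_finite_edges dag_card_edges_le)
  have "real (mu C E) \<le> 2 ^ card E"
    using mu_le_two_power[OF finE] by (simp flip: of_nat_le_iff)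
  also have "\<dots> = sqrt 2 ^ (2 * card E)"
    by (simp add: power_mult)
  also have "\<dots> \<le> sqrt 2 ^ (card V ^ 2)"
    using edges by (intro power_increasing) auto
  finally show ?thesis .
qed

lemma output_sensitive_enum_length:
  "output_sensitive_enum S d L \<Longrightarrow> length L = card S"
  unfolding output_sensitive_enum_def by (metis distinct_card length_map)

lemma alg_run_iff: "alg_run s t L \<longleftrightarrow> (\<exists>(I, d)\<in>set L. (s, t) \<in> I\<^sup>*)"
  by (induction s t L rule: alg_run.induct) auto

lemma alg_run_decides_dacc:
  assumes "finite E" "set (map fst L) = {I. maximal_indep_set C E I}"
  shows "alg_run s t L \<longleftrightarrow> dacc V E C s t"
proof
  assume "alg_run s t L"
  then obtain I d where "(I, d) \<in> set L" "(s, t) \<in> I\<^sup>*"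
    unfolding alg_run_iff by auto
  moreover from this have "maximal_indep_set C E I"
    using assms(2) by force
  ultimately show "dacc V E C s t"
    unfolding dacc_def maximal_indep_set_def indep_set_def by blast
next
  assume "dacc V E C s t"
  then obtain E' where "indep_set C E E'" and path: "(s, t) \<in> E'\<^sup>*"
    unfolding dacc_def by blast
  then obtain J where J: "maximal_indep_set C E J" "E' \<subseteq> J"
    using indep_set_extends_to_maximal assms(1) by blast
  then have "J \<in> fst ` set L"
    using assms(2) by simp
  then obtain d where "(J, d) \<in> set L"
    by force
  moreover have "(s, t) \<in> J\<^sup>*"
    using path J(2) rtrancl_mono by blast
  ultimately show "alg_run s t L"
    unfolding alg_run_iff by auto
qed

lemma alg_time_le_delays_plus_searches:
  assumes "\<forall>(I, d)\<in>set L. 0 \<le> d \<and> bfs n (card I) \<le> B" "0 \<le> B"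
  shows "alg_time bfs n s t L \<le> sum_list (map snd L) + real (length L) * B"
  using assms
proof (induction bfs n s t L rule: alg_time.induct)
  case (2 bfs n s t I d rest)
  have "bfs n (card I) \<le> B"
    using "2.prems"(1) by simp
  moreover have "0 \<le> sum_list (map snd rest) + real (length rest) * B"
    using "2.prems" by (intro add_nonneg_nonneg sum_list_nonneg) auto
  moreover have "(s, t) \<notin> I\<^sup>* \<Longrightarrow>
      alg_time bfs n s t rest \<le> sum_list (map snd rest) + real (length rest) * B"
    using 2 by simp
  ultimately show ?case
    by (cases "(s, t) \<in> I\<^sup>*") (auto simp: algebra_simps)
qed simp

lemma alg_time_bound:
  assumes enum: "output_sensitive_enum {I. maximal_indep_set C E I} d L"
    and "finite E" "1 \<le> d" "1 \<le> n"
    and bfs_bound: "\<forall>k. bfs n k \<le> cB * (real n + real k)"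
  shows "alg_time bfs n s t L \<le> (1 + \<bar>cB\<bar>) * (real n + real (card E)) * d * real (mu C E)"
proof -
  let ?S = "\<bar>cB\<bar> * (real n + real (card E))"
  have "bfs n (card I) \<le> ?S" if "(I, e) \<in> set L" for I e
  proof -
    have "maximal_indep_set C E I"
      using that enum unfolding output_sensitive_enum_def by force
    then have "card I \<le> card E"
      using \<open>finite E\<close> maximal_indep_set_subset by (intro card_mono)
    have "bfs n (card I) \<le> cB * (real n + real (card I))"
      using bfs_bound by blast
    also have "\<dots> \<le> \<bar>cB\<bar> * (real n + real (card I))"
      by (intro mult_right_mono) auto
    also have "\<dots> \<le> ?S"
      using \<open>card I \<le> card E\<close> by (intro mult_left_mono) auto
    finally show ?thesis .
  qed
  moreover have "0 \<le> e" if "(I, e) \<in> set L" for I e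
    using that enum unfolding output_sensitive_enum_def by force
  ultimately have "alg_time bfs n s t L \<le> sum_list (map snd L) + real (length L) * ?S"
    by (intro alg_time_le_delays_plus_searches) auto
  also have "\<dots> \<le> d * real (length L) + real (length L) * ?S"
    using enum unfolding output_sensitive_enum_def by simp
  also have "\<dots> \<le> (1 + \<bar>cB\<bar>) * (real n + real (card E)) * d * real (length L)"
  proof -
    have "d * real (length L) \<le> (real n + real (card E)) * d * real (length L)"
      using mult_right_mono[of 1 "real n + real (card E)" "d * real (length L)"] assms by simp
    moreover have "real (length L) * ?S \<le> ?S * d * real (length L)"
      using mult_left_mono[of 1 d "?S * real (length L)"] assms by (simp add: mult_ac)
    ultimately show ?thesis by (simp add: algebra_simps)
  qed
  finally show ?thesis
    using output_sensitive_enum_length[OF enum] by (simp add: mu_def)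
qed

lemma size_times_cost_le_powr:
  fixes M :: "nat \<Rightarrow> real"
  assumes M: "\<forall>k. M k \<le> c * max 1 (real k powr a)" "0 \<le> M m"
    and "0 < c" "0 \<le> a" "2 + 2 * a \<le> b" "1 \<le> n" "2 * m \<le> n\<^sup>2"
  shows "(real n + real m) * M m \<le> 2 * c * real n powr b"
proof -
  have n2: "real n powr 2 = real n ^ 2"
    using assms by (simp add: powr_realpow)
  have "m \<le> n\<^sup>2"
    using assms by linarith
  then have m_le: "real m \<le> real n ^ 2"
    by (metis of_nat_le_iff of_nat_power)
  moreover have "real n \<le> real n ^ 2"
    using assms by (simp add: power2_eq_square)
  ultimately have size: "real n + real m \<le> 2 * real n powr 2"
    using n2 by linarith
  have "real m powr a \<le> (real n powr 2) powr a"
    using n2 m_le assms by (intro powr_mono2) auto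
  also have "\<dots> = real n powr (2 * a)"
    by (rule powr_powr)
  finally have "max 1 (real m powr a) \<le> real n powr (2 * a)"
    using assms ge_one_powr_ge_zero[of "real n" "2 * a"] by simp
  then have cost: "M m \<le> c * real n powr (2 * a)"
    using M(1) \<open>0 < c\<close> by (meson mult_left_mono less_imp_le order_trans)
  have "(real n + real m) * M m \<le> (2 * real n powr 2) * (c * real n powr (2 * a))"
    using size cost assms by (intro mult_mono) auto
  also have "\<dots> = 2 * c * real n powr (2 + 2 * a)"
    by (simp add: powr_add)
  also have "\<dots> \<le> 2 * c * real n powr b"
    using assms by (intro mult_left_mono powr_mono) auto
  finally show ?thesis .
qed

theorem lemma4p1:
  fixes M :: "nat \<Rightarrow> real" and bfs :: "nat \<Rightarrow> nat \<Rightarrow> real" and cB :: real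
  assumes M_bound: "M \<in> O(\<lambda>k. real k powr 2.372)"
    and M_ge1: "\<forall>k. 1 \<le> M k"
    and bfs_nonneg: "\<forall>n k. 0 \<le> bfs n k"
    and bfs_bound: "\<forall>n k. bfs n k \<le> cB * (real n + real k)"
  shows "\<exists>K1 K2 K3 :: real. \<forall>(V :: 'v set) E C s t L.
    is_dag V E \<longrightarrow> constraint_graph E C \<longrightarrow> s \<in> V \<longrightarrow> t \<in> V \<longrightarrow>
    output_sensitive_enum {I. maximal_indep_set C E I} (M (card E)) L \<longrightarrow>
      (alg_run s t L \<longleftrightarrow> dacc V E C s t) \<and>
      alg_time bfs (card V) s t L
        \<le> K1 * (real (card V) + real (card E)) * M (card E) * real (mu C E) \<and>
      (real (card V) + real (card E)) * M (card E) * real (mu C E)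
        \<le> K2 * real (card V) powr 6.75 * real (mu C E) \<and>
      real (card V) powr 6.75 * real (mu C E) \<le> K3 * 1.45 ^ (card V ^ 2)"
proof -
  obtain c where c: "c > 0" "\<forall>k. M k \<le> c * max 1 (real k powr 2.372)"
    using bigo_imp_le_const_max_one[OF M_bound] by auto
  have "sqrt 2 < (1.45::real)"
    by (rule real_less_lsqrt) (auto simp: power2_eq_square)
  then obtain K where K: "\<And>n. real n powr 6.75 * sqrt 2 ^ (n\<^sup>2) \<le> K * 1.45 ^ (n\<^sup>2)"
    using powr_times_power_square_le[of "sqrt 2" "1.45" "6.75"] by auto
  show ?thesis
  proof (rule exI[of _ "1 + \<bar>cB\<bar>"], rule exI[of _ "2 * c"], rule exI[of _ K],
      intro allI impI conjI)
    fix V :: "'v set" and E C s t L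
    assume dag: "is_dag V E" and "constraint_graph E C" and "s \<in> V" and "t \<in> V"
      and enum: "output_sensitive_enum {I. maximal_indep_set C E I} (M (card E)) L"
    have finE: "finite E" and edges: "2 * card E \<le> card V ^ 2"
      using dag by (simp_all add: dag_finite_edges dag_card_edges_le)
    have "1 \<le> card V"
      using dag \<open>s \<in> V\<close> by (auto simp: is_dag_def Suc_le_eq card_gt_0_iff)
    show "alg_run s t L \<longleftrightarrow> dacc V E C s t"
      using alg_run_decides_dacc[OF finE] enum unfolding output_sensitive_enum_def by blast
    show "alg_time bfs (card V) s t L
        \<le> (1 + \<bar>cB\<bar>) * (real (card V) + real (card E)) * M (card E) * real (mu C E)"
      using alg_time_bound[OF enum finE] M_ge1 bfs_bound \<open>1 \<le> card V\<close> by auto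
    have "(real (card V) + real (card E)) * M (card E) \<le> 2 * c * real (card V) powr 6.75"
      by (rule size_times_cost_le_powr[where a = "2.372"])
        (use c M_ge1[rule_format, of "card E"] edges \<open>1 \<le> card V\<close> in auto)
    then show "(real (card V) + real (card E)) * M (card E) * real (mu C E)
        \<le> 2 * c * real (card V) powr 6.75 * real (mu C E)"
      by (rule mult_right_mono) simp
    show "real (card V) powr 6.75 * real (mu C E) \<le> K * 1.45 ^ (card V ^ 2)"
      using mult_left_mono[OF dag_mu_le_sqrt2_power[OF dag] powr_ge_zero] K[of "card V"]
      by (rule order_trans)
  qed
qed

end
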